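(* Let $\mathbb F_\Theta$ be a real flag manifold associated to a split real form. There exists an $M$-invariant complex structure $J$ on $T_{b_\Theta}\mathbb F_\Theta\cong\mathfrak n_\Theta^-$ if and only if every $M$-equivalence class $[\alpha]$ contained in $\Pi^-\setminus\langle\Theta\rangle^-$ has an even number of elements. In this case the $M$-invariant complex structures are exactly the direct sums of complex structures on the subspaces $V_{[\alpha]}=\sum_{\beta\sim_M\alpha}\mathfrak g_\beta\subset\mathfrak n_\Theta^-$, and on each $V_{[\alpha]}$ the set of $M$-invariant complex structures is parametrized by $\mathrm{GL}(d,\mathbb R)/\mathrm{GL}(d/2,\mathbb C)$, where $d=\dim V_{[\alpha]}$.
   Context: Let $\mathfrak g$ be the split real form of a complex simple Lie algebra, with Iwasawa decomposition $\mathfrak g=\mathfrak k\oplus\mathfrak a\oplus\mathfrak n$, roots $\Pi$ of $(\mathfrak g,\mathfrak a)$ (root spaces $\mathfrak g_\alpha$ one-dimensional), positive roots $\Pi^+$ (those in $\mathfrak n$), $\Pi^-=-\Pi^+$, simple roots $\Sigma$. For $\Theta\subset\Sigma$, $\langle\Theta\rangle^\pm$ are the positive/negative roots that are combinations of elements of $\Theta$, $\mathfrak p_\Theta=\mathfrak a\oplus\sum_{\alpha\in\Pi^+}\mathfrak g_\alpha\oplus\sum_{\alpha\in\langle\Theta\rangle^-}\mathfrak g_\alpha$, $G$ the inner automorphism group of $\mathfrak g$, $K$ its maximal compact subgroup (generated by $\exp\mathrm{ad}(\mathfrak k)$), $P_\Theta$ the normalizer of $\mathfrak p_\Theta$ in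 $G$, $K_\Theta=K\cap P_\Theta$, $\mathbb F_\Theta=G/P_\Theta=K/K_\Theta$ with origin $b_\Theta$. The tangent space $T_{b_\Theta}\mathbb F_\Theta$ is identified, $K_\Theta$-equivariantly, with $\mathfrak n_\Theta^-=\sum_{\alpha\in\Pi^-\setminus\langle\Theta\rangle^-}\mathfrak g_\alpha$ with $K_\Theta$ acting by the adjoint action. $M$ is the centralizer of $\mathfrak a$ in $K$ (a finite group acting on each $\mathfrak g_\alpha$ by $\pm1$). Two roots $\alpha,\beta$ are $M$-equivalent, $\alpha\sim_M\beta$, if the representations of $M$ on $\mathfrak g_\alpha$ and $\mathfrak g_\beta$ are equivalent; $[\alpha]$ denotes the class. A complex structure $J$ is $M$-invariant if $J\,\mathrm{Ad}(m)=\mathrm{Ad}(m)\,J$ for all $m\in M$. *)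

theory Defs
  imports Complex_Main "Jordan_Normal_Form.Matrix"
begin

(* Model of T_{b_Theta} F_Theta = n_Theta^- in the basis given by one chosen nonzero vector
   X_alpha of each (one-dimensional) root space g_alpha, alpha \<in> Pi^- - <Theta>^-.
   The roots in Pi^- - <Theta>^- form the finite type 'r.
   A real linear operator on n_Theta^- is its matrix J :: 'r \<Rightarrow> 'r \<Rightarrow> real in this basis
   (J X_j = \<Sum>i. J i j X_i).
   M acts on g_alpha by the sign chi m alpha \<in> {1,-1}, i.e. Ad(m) is the diagonal matrix
   diag(chi m alpha). *)

definition mat_mul :: "('r::finite \<Rightarrow> 'r \<Rightarrow> real) \<Rightarrow> ('r \<Rightarrow> 'r \<Rightarrow> real) \<Rightarrow> 'r \<Rightarrow> 'r \<Rightarrow> real" where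
  "mat_mul A B = (\<lambda>i k. \<Sum>j\<in>UNIV. A i j * B j k)"

definition Ad_M :: "('m \<Rightarrow> 'r \<Rightarrow> real) \<Rightarrow> 'm \<Rightarrow> 'r \<Rightarrow> 'r \<Rightarrow> real" where
  "Ad_M chi m = (\<lambda>i j. if i = j then chi m i else 0)"

definition complex_structure :: "('r::finite \<Rightarrow> 'r \<Rightarrow> real) \<Rightarrow> bool" where
  "complex_structure J \<longleftrightarrow> mat_mul J J = (\<lambda>i k. if i = k then -1 else 0)"

definition M_invariant :: "'m set \<Rightarrow> ('m \<Rightarrow> 'r \<Rightarrow> real) \<Rightarrow> ('r::finite \<Rightarrow> 'r \<Rightarrow> real) \<Rightarrow> bool" where
  "M_invariant M chi J \<longleftrightarrow> (\<forall>m\<in>M. mat_mul J (Ad_M chi m) = mat_mul (Ad_M chi m) J)"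

(* M-equivalence: the one-dimensional representations of M on g_alpha, g_beta are
   equivalent iff their characters coincide *)
definition M_equiv :: "'m set \<Rightarrow> ('m \<Rightarrow> 'r \<Rightarrow> real) \<Rightarrow> 'r \<Rightarrow> 'r \<Rightarrow> bool" where
  "M_equiv M chi a b \<longleftrightarrow> (\<forall>m\<in>M. chi m a = chi m b)"

definition M_class :: "'m set \<Rightarrow> ('m \<Rightarrow> 'r \<Rightarrow> real) \<Rightarrow> 'r \<Rightarrow> 'r set" where
  "M_class M chi a = {b. M_equiv M chi b a}"

definition direct_sum_of_class_cs :: "'m set \<Rightarrow> ('m \<Rightarrow> 'r \<Rightarrow> real) \<Rightarrow> ('r::finite \<Rightarrow> 'r \<Rightarrow> real) \<Rightarrow> bool" where
  "direct_sum_of_class_cs M chi J \<longleftrightarrow>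
     (\<forall>i j. \<not> M_equiv M chi i j \<longrightarrow> J i j = 0) \<and>
     (\<forall>a. \<forall>i\<in>M_class M chi a. \<forall>k\<in>M_class M chi a.
        (\<Sum>j\<in>M_class M chi a. J i j * J j k) = (if i = k then -1 else 0))"

(* M-invariant complex structures on V_C (C a class), as matrices indexed by C x C,
   extended by 0 outside C x C *)
definition class_cs :: "'m set \<Rightarrow> ('m \<Rightarrow> 'r \<Rightarrow> real) \<Rightarrow> 'r set \<Rightarrow> ('r \<Rightarrow> 'r \<Rightarrow> real) set" where
  "class_cs M chi C = {K. (\<forall>i j. (i \<notin> C \<or> j \<notin> C) \<longrightarrow> K i j = 0) \<and>
       (\<forall>i\<in>C. \<forall>k\<in>C. (\<Sum>j\<in>C. K i j * K j k) = (if i = k then -1 else 0)) \<and>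
       (\<forall>m\<in>M. \<forall>i\<in>C. \<forall>k\<in>C. K i k * chi m k = chi m i * K i k)}"

definition GL_real :: "nat \<Rightarrow> real mat set" where
  "GL_real n = {A. A \<in> carrier_mat n n \<and> invertible_mat A}"

definition GL_complex :: "nat \<Rightarrow> complex mat set" where
  "GL_complex n = {Z. Z \<in> carrier_mat n n \<and> invertible_mat Z}"

definition mat_inv :: "'a::semiring_1 mat \<Rightarrow> 'a mat" where
  "mat_inv A = (SOME B. inverts_mat A B \<and> inverts_mat B A)"

definition J_std :: "nat \<Rightarrow> real mat" where
  "J_std k = four_block_mat (0\<^sub>m k k) (- 1\<^sub>m k) (1\<^sub>m k) (0\<^sub>m k k)"

definition realify :: "complex mat \<Rightarrow> real mat" where
  "realify Z = four_block_mat (map_mat Re Z) (- map_mat Im Z) (map_mat Im Z) (map_mat Re Z)"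

(* transport a d x d matrix to an operator on V_C via an enumeration e : {0..<d} -> C
   of the root basis of V_C (extended by 0 outside C x C) *)
definition transport :: "(nat \<Rightarrow> 'r) \<Rightarrow> nat \<Rightarrow> real mat \<Rightarrow> 'r \<Rightarrow> 'r \<Rightarrow> real" where
  "transport e d A = (\<lambda>i j. if i \<in> e ` {0..<d} \<and> j \<in> e ` {0..<d}
        then A $$ (the_inv_into {0..<d} e i, the_inv_into {0..<d} e j) else 0)"

definition param :: "(nat \<Rightarrow> 'r) \<Rightarrow> nat \<Rightarrow> real mat \<Rightarrow> 'r \<Rightarrow> 'r \<Rightarrow> real" where
  "param e d A = transport e d (A * J_std (d div 2) * mat_inv A)"

end

theory Submission
  imports Defs "Jordan_Normal_Form.Determinant"
begin

(* M acts on the root basis of n_Theta^- through real characters, so a real operator commutes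
   with M iff it vanishes between inequivalent roots: the M-invariant complex structures are
   exactly the direct sums of complex structures on the blocks V_[alpha].
   A real d x d matrix K with K^2 = -1 forces d to be even, since det K ^ 2 = (-1)^d, and K is
   conjugate to the standard J_0: regarding R^d as a complex space with K as multiplication by i,
   one picks inductively vectors Euclidean-orthogonal to the complex span of the previous ones and
   obtains a basis v_1, ..., v_k, K v_1, ..., K v_k. Hence GL(d,R) acts transitively by conjugation
   on the complex structures of a block, and the stabiliser of J_0 is the group of matrices
   commuting with J_0, which is GL(d/2,C) embedded by realification. *)

section \<open>Invariance under \<open>M\<close>\<close>

lemma M_equiv_refl: "M_equiv M chi a a"
  by (simp add: M_equiv_def)

lemma M_equiv_sym: "M_equiv M chi a b \<Longrightarrow> M_equiv M chi b a"
  by (simp add: M_equiv_def)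

lemma M_equiv_trans: "M_equiv M chi a b \<Longrightarrow> M_equiv M chi b c \<Longrightarrow> M_equiv M chi a c"
  by (simp add: M_equiv_def)

lemma mem_M_class_iff: "i \<in> M_class M chi a \<longleftrightarrow> M_equiv M chi i a"
  by (simp add: M_class_def)

lemma M_class_self: "a \<in> M_class M chi a"
  by (simp add: mem_M_class_iff M_equiv_refl)

lemma M_class_eq: "i \<in> M_class M chi a \<Longrightarrow> M_class M chi i = M_class M chi a"
  unfolding M_class_def by (auto intro: M_equiv_trans M_equiv_sym)

lemma mat_mul_Ad_M: "mat_mul J (Ad_M chi m) i k = J i k * chi m k"
  unfolding mat_mul_def Ad_M_def by (simp add: if_distrib[of "\<lambda>x. _ * x"] cong: if_cong)

lemma Ad_M_mat_mul: "mat_mul (Ad_M chi m) J i k = chi m i * J i k"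
  unfolding mat_mul_def Ad_M_def by (simp add: if_distrib[of "\<lambda>x. x * _"] cong: if_cong)

text \<open>Only real-valuedness of the characters matters here.\<close>

lemma M_invariant_iff_block_diagonal:
  "M_invariant M chi J \<longleftrightarrow> (\<forall>i j. \<not> M_equiv M chi i j \<longrightarrow> J i j = 0)"
proof -
  have "M_invariant M chi J \<longleftrightarrow> (\<forall>m\<in>M. \<forall>i k. J i k * chi m k = chi m i * J i k)"
    unfolding M_invariant_def fun_eq_iff mat_mul_Ad_M Ad_M_mat_mul by simp
  also have "\<dots> \<longleftrightarrow> (\<forall>i k. \<not> M_equiv M chi i k \<longrightarrow> J i k = 0)"
  proof
    assume inv: "\<forall>m\<in>M. \<forall>i k. J i k * chi m k = chi m i * J i k"
    show "\<forall>i k. \<not> M_equiv M chi i k \<longrightarrow> J i k = 0"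
    proof (intro allI impI)
      fix i k assume "\<not> M_equiv M chi i k"
      then obtain m where m: "m \<in> M" "chi m i \<noteq> chi m k" unfolding M_equiv_def by auto
      from inv m(1) have "J i k * chi m k = chi m i * J i k" by blast
      then have "J i k * (chi m k - chi m i) = 0" by (simp add: algebra_simps)
      with m(2) show "J i k = 0" by simp
    qed
  next
    assume "\<forall>i k. \<not> M_equiv M chi i k \<longrightarrow> J i k = 0"
    then show "\<forall>m\<in>M. \<forall>i k. J i k * chi m k = chi m i * J i k"
      unfolding M_equiv_def by (metis mult.commute mult_zero_left)
  qed
  finally show ?thesis .
qed

lemma sum_block_diagonal_M_class:
  fixes J :: "'r::finite \<Rightarrow> 'r \<Rightarrow> real"
  assumes block: "\<forall>i j. \<not> M_equiv M chi i j \<longrightarrow> J i j = 0" and i: "M_equiv M chi i a"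
  shows "(\<Sum>j\<in>UNIV. J i j * J j k) = (\<Sum>j\<in>M_class M chi a. J i j * J j k)"
proof (rule sum.mono_neutral_right)
  show "\<forall>j\<in>UNIV - M_class M chi a. J i j * J j k = 0"
  proof
    fix j assume j: "j \<in> UNIV - M_class M chi a"
    have "\<not> M_equiv M chi i j"
    proof
      assume "M_equiv M chi i j"
      then have "M_equiv M chi j a" by (rule M_equiv_trans[OF M_equiv_sym i])
      with j show False by (simp add: mem_M_class_iff)
    qed
    with block show "J i j * J j k = 0" by simp
  qed
qed auto

lemma complex_structure_M_invariant_iff_direct_sum:
  fixes J :: "'r::finite \<Rightarrow> 'r \<Rightarrow> real"
  shows "complex_structure J \<and> M_invariant M chi J \<longleftrightarrow> direct_sum_of_class_cs M chi J"
proof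
  assume "complex_structure J \<and> M_invariant M chi J"
  then have block: "\<forall>i j. \<not> M_equiv M chi i j \<longrightarrow> J i j = 0"
    and sq: "\<And>i k. (\<Sum>j\<in>UNIV. J i j * J j k) = (if i = k then -1 else 0)"
    unfolding M_invariant_iff_block_diagonal complex_structure_def mat_mul_def
    by (auto simp: fun_eq_iff)
  have "(\<Sum>j\<in>M_class M chi a. J i j * J j k) = (if i = k then -1 else 0)"
    if "i \<in> M_class M chi a" for a i k
    using sum_block_diagonal_M_class[OF block, of i a k] sq[of i k] that
    by (simp add: mem_M_class_iff)
  with block show "direct_sum_of_class_cs M chi J"
    unfolding direct_sum_of_class_cs_def by blast
next
  assume "direct_sum_of_class_cs M chi J"
  then have block: "\<forall>i j. \<not> M_equiv M chi i j \<longrightarrow> J i j = 0"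
    and sq: "\<And>a i k. i \<in> M_class M chi a \<Longrightarrow> k \<in> M_class M chi a \<Longrightarrow>
              (\<Sum>j\<in>M_class M chi a. J i j * J j k) = (if i = k then -1 else 0)"
    unfolding direct_sum_of_class_cs_def by blast+
  have JJ: "mat_mul J J i k = (if i = k then -1 else 0)" for i k
  proof -
    have "mat_mul J J i k = (\<Sum>j\<in>M_class M chi i. J i j * J j k)"
      unfolding mat_mul_def by (rule sum_block_diagonal_M_class[OF block M_equiv_refl])
    also have "\<dots> = (if i = k then -1 else 0)"
    proof (cases "k \<in> M_class M chi i")
      case True
      then show ?thesis by (rule sq[OF M_class_self])
    next
      case False
      have "J j k = 0" if "j \<in> M_class M chi i" for j
      proof -
        from False obtain m where "m \<in> M" "chi m k \<noteq> chi m i"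
          by (auto simp: M_class_def M_equiv_def)
        with that have "\<not> M_equiv M chi j k" unfolding M_class_def M_equiv_def by force
        with block show ?thesis by blast
      qed
      moreover have "i \<noteq> k" using False M_class_self[of i M chi] by auto
      ultimately show ?thesis by simp
    qed
    finally show ?thesis .
  qed
  have "complex_structure J"
    unfolding complex_structure_def by (intro ext) (rule JJ)
  with block show "complex_structure J \<and> M_invariant M chi J"
    unfolding M_invariant_iff_block_diagonal by blast
qed

section \<open>Matrix algebra\<close>

lemma index_mult_mat_sum:
  assumes "A \<in> carrier_mat n m" "B \<in> carrier_mat m p" "i < n" "j < p"
  shows "(A * B) $$ (i, j) = (\<Sum>l<m. A $$ (i, l) * B $$ (l, j))"
  using assms by (simp add: scalar_prod_def atLeast0LessThan)

lemma assoc_mult_mat_dims: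
  "dim_col (A :: 'a :: semiring_0 mat) = dim_row B \<Longrightarrow> dim_col B = dim_row C \<Longrightarrow> A * B * C = A * (B * C)"
  by (rule assoc_mult_mat[of A "dim_row A" "dim_col A" B "dim_col B" C "dim_col C"]) auto

lemma mult_mat_cancel_left:
  fixes A B Y :: "'a :: comm_ring_1 mat"
  assumes A: "A \<in> carrier_mat n n" and B: "B \<in> carrier_mat n n" and BA: "B * A = 1\<^sub>m n"
    and Y: "dim_row Y = n"
  shows "B * (A * Y) = Y"
proof -
  have "B * (A * Y) = (B * A) * Y" using A B Y by (simp add: assoc_mult_mat_dims)
  also have "\<dots> = Y" using BA Y by (simp add: left_mult_one_mat')
  finally show ?thesis .
qed

lemma mat_inv:
  assumes A: "A \<in> carrier_mat n n" and inv: "invertible_mat A"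
  shows "mat_inv A \<in> carrier_mat n n" "A * mat_inv A = 1\<^sub>m n" "mat_inv A * A = 1\<^sub>m n"
proof -
  have "\<exists>B. inverts_mat A B \<and> inverts_mat B A" using inv unfolding invertible_mat_def by blast
  then have inverts: "inverts_mat A (mat_inv A) \<and> inverts_mat (mat_inv A) A"
    unfolding mat_inv_def by (rule someI_ex)
  then have right: "A * mat_inv A = 1\<^sub>m n" and left: "mat_inv A * A = 1\<^sub>m (dim_row (mat_inv A))"
    using A unfolding inverts_mat_def by auto
  have "dim_col (mat_inv A) = n" using arg_cong[OF right, of dim_col] by simp
  moreover have "dim_row (mat_inv A) = n" using arg_cong[OF left, of dim_col] A by simp
  ultimately show "mat_inv A \<in> carrier_mat n n" "A * mat_inv A = 1\<^sub>m n" "mat_inv A * A = 1\<^sub>m n"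
    using right left by auto
qed

lemma invertible_mat_if_right_inverse:
  fixes A B :: "'a :: field mat"
  assumes A: "A \<in> carrier_mat n n" and B: "B \<in> carrier_mat n n" and AB: "A * B = 1\<^sub>m n"
  shows "invertible_mat A"
  using A B AB mat_mult_left_right_inverse[OF A B AB]
  unfolding invertible_mat_def inverts_mat_def by auto

lemma invertible_mat_if_det_nonzero:
  fixes A :: "'a :: field mat"
  assumes A: "A \<in> carrier_mat n n" and "det A \<noteq> 0"
  shows "invertible_mat A"
proof -
  have "A \<in> Units (ring_mat TYPE('a) n ())" by (rule det_non_zero_imp_unit[OF assms])
  then obtain B where "B \<in> carrier_mat n n" "A * B = 1\<^sub>m n"
    unfolding Units_def ring_mat_simps by auto
  then show ?thesis by (rule invertible_mat_if_right_inverse[OF A])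
qed

section \<open>Transport along an enumeration of a class\<close>

lemma transport_enum:
  assumes e: "bij_betw e {0..<d} C" and p: "p < d" and q: "q < d"
  shows "transport e d A (e p) (e q) = A $$ (p, q)"
  using bij_betw_imp_inj_on[OF e] p q unfolding transport_def by (simp add: the_inv_into_f_f)

lemma transport_outside:
  assumes "bij_betw e {0..<d} C" and "i \<notin> C \<or> j \<notin> C"
  shows "transport e d A i j = 0"
  using assms unfolding transport_def bij_betw_def by auto

lemma ex_enum_index:
  assumes "bij_betw e {0..<d} C" and "i \<in> C"
  obtains p where "p < d" and "i = e p"
  using assms unfolding bij_betw_def by auto

lemma transport_inj:
  assumes e: "bij_betw e {0..<d} C" and A: "A \<in> carrier_mat d d" and B: "B \<in> carrier_mat d d"
    and eq: "transport e d A = transport e d B"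
  shows "A = B"
proof (rule eq_matI)
  fix p q assume "p < dim_row B" "q < dim_col B"
  with B have p: "p < d" and q: "q < d" by auto
  have "A $$ (p, q) = transport e d A (e p) (e q)" by (rule transport_enum[OF e p q, symmetric])
  also have "\<dots> = B $$ (p, q)" unfolding eq by (rule transport_enum[OF e p q])
  finally show "A $$ (p, q) = B $$ (p, q)" .
qed (use A B in auto)

lemma transport_restrict:
  assumes e: "bij_betw e {0..<d} C" and K: "\<forall>i j. i \<notin> C \<or> j \<notin> C \<longrightarrow> K i j = 0"
  shows "transport e d (mat d d (\<lambda>(p, q). K (e p) (e q))) = K"
proof (intro ext)
  fix i j
  show "transport e d (mat d d (\<lambda>(p, q). K (e p) (e q))) i j = K i j"
  proof (cases "i \<in> C \<and> j \<in> C")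
    case True
    then obtain p q where "p < d" "i = e p" "q < d" "j = e q"
      using ex_enum_index[OF e] by metis
    then show ?thesis by (simp add: transport_enum[OF e])
  next
    case False
    then show ?thesis using transport_outside[OF e] K by auto
  qed
qed

lemma sum_transport_mult:
  assumes e: "bij_betw e {0..<d} C" and A: "A \<in> carrier_mat d d" and B: "B \<in> carrier_mat d d"
    and p: "p < d" and q: "q < d"
  shows "(\<Sum>j\<in>C. transport e d A (e p) j * transport e d B j (e q)) = (A * B) $$ (p, q)"
proof -
  have "(\<Sum>j\<in>C. transport e d A (e p) j * transport e d B j (e q))
      = (\<Sum>l\<in>{0..<d}. transport e d A (e p) (e l) * transport e d B (e l) (e q))"
    by (rule sum.reindex_bij_betw[OF e, symmetric])
  also have "\<dots> = (\<Sum>l\<in>{0..<d}. A $$ (p, l) * B $$ (l, q))"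
    using p q by (simp add: transport_enum[OF e])
  also have "\<dots> = (A * B) $$ (p, q)"
    using A B p q by (simp add: scalar_prod_def)
  finally show ?thesis .
qed

lemma transport_square_neg_one:
  assumes e: "bij_betw e {0..<d} C" and X: "X \<in> carrier_mat d d" and XX: "X * X = - 1\<^sub>m d"
    and i: "i \<in> C" and k: "k \<in> C"
  shows "(\<Sum>j\<in>C. transport e d X i j * transport e d X j k) = (if i = k then -1 else 0)"
proof -
  obtain p q where p: "p < d" "i = e p" and q: "q < d" "k = e q"
    using ex_enum_index[OF e i] ex_enum_index[OF e k] by metis
  have "e p = e q \<longleftrightarrow> p = q"
    using bij_betw_imp_inj_on[OF e] p q by (simp add: inj_on_eq_iff)
  then show ?thesis
    using sum_transport_mult[OF e X X p(1) q(1)] p q XX by simp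
qed

lemma restrict_square_neg_one:
  fixes K :: "'r \<Rightarrow> 'r \<Rightarrow> real"
  assumes e: "bij_betw e {0..<d} C"
    and sq: "\<forall>i\<in>C. \<forall>k\<in>C. (\<Sum>j\<in>C. K i j * K j k) = (if i = k then -1 else 0)"
  shows "mat d d (\<lambda>(p, q). K (e p) (e q)) * mat d d (\<lambda>(p, q). K (e p) (e q)) = - 1\<^sub>m d"
proof (rule eq_matI)
  fix p q assume "p < dim_row (- 1\<^sub>m d :: real mat)" "q < dim_col (- 1\<^sub>m d :: real mat)"
  then have p: "p < d" and q: "q < d" by auto
  have ep: "e p \<in> C" and eq: "e q \<in> C"
    using e p q by (auto simp: bij_betw_def)
  have "e p = e q \<longleftrightarrow> p = q"
    using bij_betw_imp_inj_on[OF e] p q by (simp add: inj_on_eq_iff)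
  then have "(\<Sum>l\<in>{0..<d}. K (e p) (e l) * K (e l) (e q)) = (if p = q then -1 else 0)"
    using sum.reindex_bij_betw[OF e, of "\<lambda>j. K (e p) j * K j (e q)"] sq ep eq by simp
  then show "(mat d d (\<lambda>(p, q). K (e p) (e q)) * mat d d (\<lambda>(p, q). K (e p) (e q))) $$ (p, q)
      = (- 1\<^sub>m d :: real mat) $$ (p, q)"
    using p q by (simp add: scalar_prod_def)
qed auto

section \<open>The standard complex structure and realification\<close>

lemma J_std_carrier: "J_std k \<in> carrier_mat (k + k) (k + k)"
  unfolding J_std_def by (rule four_block_carrier_mat) auto

lemma J_std_index:
  assumes "l < k + k" and "c < k + k"
  shows "J_std k $$ (l, c) =
    (if c < k then (if l = c + k then 1 else 0) else (if l = c - k then -1 else 0))"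
  unfolding J_std_def using assms by (auto simp: index_mat_four_block)

lemma sum_mult_J_std:
  assumes c: "c < k + k"
  shows "(\<Sum>m<k + k. X m * J_std k $$ (m, c)) = (if c < k then X (c + k) else - X (c - k))"
proof -
  have "(\<Sum>m<k + k. X m * J_std k $$ (m, c))
      = (\<Sum>m<k + k. if m = (if c < k then c + k else c - k) then (if c < k then X m else - X m) else 0)"
    by (rule sum.cong[OF refl]) (use c in \<open>auto simp: J_std_index\<close>)
  also have "\<dots> = (if c < k then X (c + k) else - X (c - k))" using c by auto
  finally show ?thesis .
qed

lemma sum_J_std_mult:
  assumes l: "l < k + k"
  shows "(\<Sum>m<k + k. J_std k $$ (l, m) * X m) = (if l < k then - X (l + k) else X (l - k))"
proof -
  have "(\<Sum>m<k + k. J_std k $$ (l, m) * X m)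
      = (\<Sum>m<k + k. if m = (if l < k then l + k else l - k) then (if l < k then - X m else X m) else 0)"
    by (rule sum.cong[OF refl]) (use l in \<open>auto simp: J_std_index\<close>)
  also have "\<dots> = (if l < k then - X (l + k) else X (l - k))" using l by auto
  finally show ?thesis .
qed

lemma J_std_square: "J_std k * J_std k = - 1\<^sub>m (k + k)"
proof (rule eq_matI)
  fix l c assume "l < dim_row (- 1\<^sub>m (k + k) :: real mat)" "c < dim_col (- 1\<^sub>m (k + k) :: real mat)"
  then have l: "l < k + k" and c: "c < k + k" by auto
  have "(J_std k * J_std k) $$ (l, c) = (\<Sum>m<k + k. J_std k $$ (l, m) * J_std k $$ (m, c))"
    by (rule index_mult_mat_sum[OF J_std_carrier J_std_carrier l c])
  also have "\<dots> = (if c < k then J_std k $$ (l, c + k) else - J_std k $$ (l, c - k))"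
    by (rule sum_mult_J_std[OF c])
  also have "\<dots> = (- 1\<^sub>m (k + k) :: real mat) $$ (l, c)"
    using l c by (auto simp: J_std_index)
  finally show "(J_std k * J_std k) $$ (l, c) = (- 1\<^sub>m (k + k) :: real mat) $$ (l, c)" .
qed (use J_std_carrier in auto)

lemma realify_carrier: "Z \<in> carrier_mat k k \<Longrightarrow> realify Z \<in> carrier_mat (k + k) (k + k)"
  unfolding realify_def by (rule four_block_carrier_mat) auto

lemma realify_index:
  assumes "Z \<in> carrier_mat k k" and "l < k + k" and "c < k + k"
  shows "realify Z $$ (l, c) =
    (if l < k then if c < k then Re (Z $$ (l, c)) else - Im (Z $$ (l, c - k))
     else if c < k then Im (Z $$ (l - k, c)) else Re (Z $$ (l - k, c - k)))"
  unfolding realify_def using assms by (auto simp: index_mat_four_block)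

lemma realify_one: "realify (1\<^sub>m k) = 1\<^sub>m (k + k)"
proof (rule eq_matI)
  fix l c assume "l < dim_row (1\<^sub>m (k + k) :: real mat)" "c < dim_col (1\<^sub>m (k + k) :: real mat)"
  then have l: "l < k + k" and c: "c < k + k" by auto
  show "realify (1\<^sub>m k) $$ (l, c) = 1\<^sub>m (k + k) $$ (l, c)"
    unfolding realify_index[OF one_carrier_mat l c] using l c by auto
qed (use realify_carrier[OF one_carrier_mat, of k] in auto)

lemma realify_inj:
  assumes Z: "Z \<in> carrier_mat k k" and W: "W \<in> carrier_mat k k" and eq: "realify Z = realify W"
  shows "Z = W"
proof (rule eq_matI)
  fix i j assume "i < dim_row W" "j < dim_col W"
  with W have i: "i < k" and j: "j < k" by auto
  then have ij: "i < k + k" "j < k + k" and ki: "k + i < k + k" by auto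
  have "realify Z $$ (i, j) = realify W $$ (i, j)" using eq by simp
  then have re: "Re (Z $$ (i, j)) = Re (W $$ (i, j))"
    unfolding realify_index[OF Z ij] realify_index[OF W ij] using i j by simp
  have "realify Z $$ (k + i, j) = realify W $$ (k + i, j)" using eq by simp
  then have im: "Im (Z $$ (i, j)) = Im (W $$ (i, j))"
    unfolding realify_index[OF Z ki ij(2)] realify_index[OF W ki ij(2)] using i j by simp
  from re im show "Z $$ (i, j) = W $$ (i, j)" by (rule complex_eqI)
qed (use Z W in auto)

lemma index_map_mat_mult:
  assumes "A \<in> carrier_mat k k" "B \<in> carrier_mat k k" "i < k" "j < k"
  shows "(map_mat f A * map_mat g B) $$ (i, j) = (\<Sum>m<k. f (A $$ (i, m)) * g (B $$ (m, j)))"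
  using assms by (simp add: scalar_prod_def atLeast0LessThan)

lemma map_mat_mult_add:
  fixes Z W :: "complex mat" and f g f' g' :: "complex \<Rightarrow> real"
  assumes Z: "Z \<in> carrier_mat k k" and W: "W \<in> carrier_mat k k"
  shows "map_mat f Z * map_mat g W + map_mat f' Z * map_mat g' W
     = mat k k (\<lambda>(i, j). \<Sum>m<k. f (Z $$ (i, m)) * g (W $$ (m, j)) + f' (Z $$ (i, m)) * g' (W $$ (m, j)))"
  by (rule eq_matI) (use Z W in \<open>simp_all add: index_map_mat_mult sum.distrib del: index_mult_mat(1)\<close>)

lemma realify_mult:
  assumes Z: "Z \<in> carrier_mat k k" and W: "W \<in> carrier_mat k k"
  shows "realify (Z * W) = realify Z * realify W"
proof -
  have neg_Im: "\<And>X :: complex mat. - map_mat Im X = map_mat (\<lambda>x. - Im x) X"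
    by (rule eq_matI) auto
  have ZW: "\<And>i j. i < k \<Longrightarrow> j < k \<Longrightarrow> (Z * W) $$ (i, j) = (\<Sum>m<k. Z $$ (i, m) * W $$ (m, j))"
    by (rule index_mult_mat_sum[OF Z W])
  have re: "\<And>i j. i < k \<Longrightarrow> j < k \<Longrightarrow> Re ((Z * W) $$ (i, j))
      = (\<Sum>m<k. Re (Z $$ (i, m)) * Re (W $$ (m, j)) + - Im (Z $$ (i, m)) * Im (W $$ (m, j)))"
    unfolding ZW Re_sum by simp
  have im: "\<And>i j. i < k \<Longrightarrow> j < k \<Longrightarrow> Im ((Z * W) $$ (i, j))
      = (\<Sum>m<k. Im (Z $$ (i, m)) * Re (W $$ (m, j)) + Re (Z $$ (i, m)) * Im (W $$ (m, j)))"
    unfolding ZW Im_sum by (simp add: algebra_simps)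
  have "realify Z * realify W = four_block_mat
      (map_mat Re Z * map_mat Re W + map_mat (\<lambda>x. - Im x) Z * map_mat Im W)
      (map_mat Re Z * map_mat (\<lambda>x. - Im x) W + map_mat (\<lambda>x. - Im x) Z * map_mat Re W)
      (map_mat Im Z * map_mat Re W + map_mat Re Z * map_mat Im W)
      (map_mat Im Z * map_mat (\<lambda>x. - Im x) W + map_mat Re Z * map_mat Re W)"
    unfolding realify_def neg_Im by (rule mult_four_block_mat) (use Z W in auto)
  also have "\<dots> = realify (Z * W)"
    unfolding realify_def neg_Im map_mat_mult_add[OF Z W]
    by (rule cong_four_block_mat; rule eq_matI)
      (use Z W in \<open>simp_all add: re im sum_negf[symmetric] algebra_simps del: index_mult_mat(1)\<close>)
  finally show ?thesis by simp
qed

lemma realify_mult_J_std: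
  assumes Z: "Z \<in> carrier_mat k k"
  shows "realify Z * J_std k = J_std k * realify Z"
proof (rule eq_matI)
  fix l c assume "l < dim_row (J_std k * realify Z)" "c < dim_col (J_std k * realify Z)"
  then have l: "l < k + k" and c: "c < k + k" using J_std_carrier[of k] realify_carrier[OF Z] by auto
  have "(realify Z * J_std k) $$ (l, c) = (\<Sum>m<k + k. realify Z $$ (l, m) * J_std k $$ (m, c))"
    by (rule index_mult_mat_sum[OF realify_carrier[OF Z] J_std_carrier l c])
  also have "\<dots> = (if c < k then realify Z $$ (l, c + k) else - realify Z $$ (l, c - k))"
    by (rule sum_mult_J_std[OF c])
  also have "\<dots> = (if l < k then - realify Z $$ (l + k, c) else realify Z $$ (l - k, c))"
    using l c Z by (auto simp: realify_index)
  also have "\<dots> = (\<Sum>m<k + k. J_std k $$ (l, m) * realify Z $$ (m, c))"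
    by (rule sum_J_std_mult[OF l, symmetric])
  also have "\<dots> = (J_std k * realify Z) $$ (l, c)"
    by (rule index_mult_mat_sum[OF J_std_carrier realify_carrier[OF Z] l c, symmetric])
  finally show "(realify Z * J_std k) $$ (l, c) = (J_std k * realify Z) $$ (l, c)" .
qed (use J_std_carrier[of k] realify_carrier[OF Z] in auto)

definition unrealify :: "nat \<Rightarrow> real mat \<Rightarrow> complex mat" where
  "unrealify k C = mat k k (\<lambda>(i, j). Complex (C $$ (i, j)) (C $$ (k + i, j)))"

lemma unrealify_carrier: "unrealify k C \<in> carrier_mat k k"
  unfolding unrealify_def by simp

lemma realify_unrealify_if_commutes_J_std:
  assumes C: "C \<in> carrier_mat (k + k) (k + k)" and comm: "C * J_std k = J_std k * C"
  shows "realify (unrealify k C) = C"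
proof (rule eq_matI)
  have shift: "(if c < k then C $$ (l, c + k) else - C $$ (l, c - k))
      = (if l < k then - C $$ (l + k, c) else C $$ (l - k, c))"
    if l: "l < k + k" and c: "c < k + k" for l c
    using arg_cong[OF comm, of "\<lambda>X. X $$ (l, c)"]
    unfolding index_mult_mat_sum[OF C J_std_carrier l c] index_mult_mat_sum[OF J_std_carrier C l c]
      sum_mult_J_std[OF c] sum_J_std_mult[OF l] .
  fix l c assume "l < dim_row C" "c < dim_col C"
  with C have l: "l < k + k" and c: "c < k + k" by auto
  show "realify (unrealify k C) $$ (l, c) = C $$ (l, c)"
  proof (cases "c < k")
    case True
    then show ?thesis
      using l c unfolding realify_index[OF unrealify_carrier l c] by (simp add: unrealify_def)
  next
    case False
    then have "c - k < k + k" "c - k < k" "c - k + k = c" using c by auto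
    then have "C $$ (l, c) = (if l < k then - C $$ (l + k, c - k) else C $$ (l - k, c - k))"
      using shift[OF l \<open>c - k < k + k\<close>] by simp
    then show ?thesis
      using False l c unfolding realify_index[OF unrealify_carrier l c]
      by (simp add: unrealify_def add.commute)
  qed
qed (use C realify_carrier[OF unrealify_carrier] in auto)

section \<open>Complex structures on \<open>\<real>\<^sup>d\<close>\<close>

definition mat_app :: "real mat \<Rightarrow> nat \<Rightarrow> (nat \<Rightarrow> real) \<Rightarrow> nat \<Rightarrow> real" where
  "mat_app K d x = (\<lambda>r. \<Sum>l<d. K $$ (r, l) * x l)"

definition dot :: "nat \<Rightarrow> (nat \<Rightarrow> real) \<Rightarrow> (nat \<Rightarrow> real) \<Rightarrow> real" where
  "dot d x y = (\<Sum>r<d. x r * y r)"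

text \<open>A matrix \<open>K\<close> with \<open>K\<^sup>2 = -1\<close> makes \<open>\<real>\<^sup>d\<close> a complex vector space with \<open>K\<close> as
  multiplication by \<open>\<i>\<close>. Then \<open>cx_comb K d vs a b\<close> is the complex linear combination
  \<open>\<Sum> (a i + \<i> b i) vs!i\<close> and \<open>cx_indep\<close> is complex linear independence.\<close>

definition cx_comb ::
    "real mat \<Rightarrow> nat \<Rightarrow> (nat \<Rightarrow> real) list \<Rightarrow> (nat \<Rightarrow> real) \<Rightarrow> (nat \<Rightarrow> real) \<Rightarrow> nat \<Rightarrow> real" where
  "cx_comb K d vs a b = (\<lambda>r. \<Sum>i<length vs. a i * (vs!i) r + b i * mat_app K d (vs!i) r)"

definition cx_indep :: "real mat \<Rightarrow> nat \<Rightarrow> (nat \<Rightarrow> real) list \<Rightarrow> bool" where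
  "cx_indep K d vs \<longleftrightarrow>
     (\<forall>a b. (\<forall>r<d. cx_comb K d vs a b r = 0) \<longrightarrow> (\<forall>i<length vs. a i = 0 \<and> b i = 0))"

lemma mat_app_cong: "(\<And>l. l < d \<Longrightarrow> x l = y l) \<Longrightarrow> mat_app K d x r = mat_app K d y r"
  unfolding mat_app_def by (rule sum.cong) auto

lemma mat_app_add3:
  "mat_app K d (\<lambda>r. s r + a * u r + b * w r) r = mat_app K d s r + a * mat_app K d u r + b * mat_app K d w r"
  unfolding mat_app_def by (simp add: sum_distrib_left sum.distrib algebra_simps)

lemma mat_app_linear:
  "mat_app K d (\<lambda>r. \<Sum>i<n. a i * f i r + b i * g i r) r
    = (\<Sum>i<n. a i * mat_app K d (f i) r + b i * mat_app K d (g i) r)"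
proof -
  have "mat_app K d (\<lambda>r. \<Sum>i<n. a i * f i r + b i * g i r) r
      = (\<Sum>l<d. \<Sum>i<n. K $$ (r, l) * (a i * f i l + b i * g i l))"
    unfolding mat_app_def by (simp add: sum_distrib_left)
  also have "\<dots> = (\<Sum>i<n. \<Sum>l<d. K $$ (r, l) * (a i * f i l + b i * g i l))"
    by (rule sum.swap)
  also have "\<dots> = (\<Sum>i<n. a i * mat_app K d (f i) r + b i * mat_app K d (g i) r)"
    unfolding mat_app_def by (simp add: sum_distrib_left sum.distrib algebra_simps)
  finally show ?thesis .
qed

lemma mat_app_mat_app:
  assumes K: "K \<in> carrier_mat d d" and KK: "K * K = - 1\<^sub>m d" and r: "r < d"
  shows "mat_app K d (mat_app K d x) r = - x r"
proof -
  have "mat_app K d (mat_app K d x) r = (\<Sum>l<d. \<Sum>m<d. K $$ (r, l) * (K $$ (l, m) * x m))"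
    unfolding mat_app_def by (simp add: sum_distrib_left)
  also have "\<dots> = (\<Sum>m<d. \<Sum>l<d. K $$ (r, l) * (K $$ (l, m) * x m))"
    by (rule sum.swap)
  also have "\<dots> = (\<Sum>m<d. (K * K) $$ (r, m) * x m)"
  proof (rule sum.cong[OF refl])
    fix m assume "m \<in> {..<d}"
    then have "(K * K) $$ (r, m) = (\<Sum>l<d. K $$ (r, l) * K $$ (l, m))"
      by (intro index_mult_mat_sum[OF K K r]) simp
    then show "(\<Sum>l<d. K $$ (r, l) * (K $$ (l, m) * x m)) = (K * K) $$ (r, m) * x m"
      by (simp add: sum_distrib_right mult.assoc)
  qed
  also have "\<dots> = - x r"
    using r by (simp add: KK if_distrib[of "\<lambda>y. y * _"] sum_negf cong: if_cong)
  finally show ?thesis .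
qed

lemma mat_app_cx_comb:
  assumes K: "K \<in> carrier_mat d d" and KK: "K * K = - 1\<^sub>m d" and r: "r < d"
  shows "mat_app K d (cx_comb K d vs a b) r = cx_comb K d vs (\<lambda>i. - b i) a r"
  unfolding cx_comb_def mat_app_linear by (simp add: mat_app_mat_app[OF K KK r])

lemma dot_cx_comb:
  "dot d (cx_comb K d vs a b) u
    = (\<Sum>i<length vs. a i * dot d (vs!i) u + b i * dot d (mat_app K d (vs!i)) u)"
proof -
  have "dot d (cx_comb K d vs a b) u
      = (\<Sum>r<d. \<Sum>i<length vs. (a i * (vs!i) r + b i * mat_app K d (vs!i) r) * u r)"
    unfolding dot_def cx_comb_def by (simp add: sum_distrib_right)
  also have "\<dots> = (\<Sum>i<length vs. \<Sum>r<d. (a i * (vs!i) r + b i * mat_app K d (vs!i) r) * u r)"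
    by (rule sum.swap)
  also have "\<dots> = (\<Sum>i<length vs. a i * dot d (vs!i) u + b i * dot d (mat_app K d (vs!i)) u)"
    unfolding dot_def by (simp add: sum_distrib_left sum.distrib algebra_simps)
  finally show ?thesis .
qed

lemma dot_cong: "(\<And>r. r < d \<Longrightarrow> x r = y r) \<Longrightarrow> dot d x u = dot d y u"
  unfolding dot_def by (rule sum.cong) auto

lemma dot_add3: "dot d (\<lambda>r. s r + a * u r + b * w r) x = dot d s x + a * dot d u x + b * dot d w x"
  unfolding dot_def by (simp add: sum_distrib_left sum.distrib algebra_simps)

lemma dot_self_pos:
  assumes "i < d" "w i \<noteq> 0"
  shows "dot d w w > 0"
proof -
  have "w i * w i \<le> dot d w w"
    unfolding dot_def by (rule member_le_sum) (use assms in auto)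
  moreover have "w i * w i > 0" using assms(2) not_real_square_gt_zero by blast
  ultimately show ?thesis by simp
qed

lemma cx_comb_snoc:
  "cx_comb K d (vs @ [w]) a b r
    = cx_comb K d vs a b r + a (length vs) * w r + b (length vs) * mat_app K d w r"
  unfolding cx_comb_def by (simp add: nth_append)

lemma dot_zero_left: "(\<And>r. r < d \<Longrightarrow> s r = 0) \<Longrightarrow> dot d s x = 0"
  unfolding dot_def by (rule sum.neutral) auto

lemma exists_nonzero_solution:
  fixes N :: "nat \<Rightarrow> nat \<Rightarrow> real"
  assumes nm: "n < m"
  shows "\<exists>x. (\<exists>i<m. x i \<noteq> 0) \<and> (\<forall>r<n. (\<Sum>c<m. N r c * x c) = 0)"
proof -
  define A where "A = mat\<^sub>r m m (\<lambda>i. if i = n then 0\<^sub>v m else vec m (\<lambda>c. if i < n then N i c else 0))"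
  have A: "A \<in> carrier_mat m m" unfolding A_def by simp
  have "det A = 0" unfolding A_def by (rule det_row_0[OF nm]) auto
  then obtain v where v: "v \<in> carrier_vec m" "v \<noteq> 0\<^sub>v m" "A *\<^sub>v v = 0\<^sub>v m"
    using det_0_iff_vec_prod_zero_field[OF A] by blast
  have "\<exists>i<m. v $ i \<noteq> 0"
  proof (rule ccontr)
    assume "\<not> (\<exists>i<m. v $ i \<noteq> 0)"
    then have "v = 0\<^sub>v m" using v(1) by (intro eq_vecI) auto
    with v(2) show False by simp
  qed
  moreover have "(\<Sum>c<m. N r c * v $ c) = 0" if r: "r < n" for r
  proof -
    have "0 = (A *\<^sub>v v) $ r" using v(3) r nm by simp
    also have "\<dots> = (\<Sum>c<m. N r c * v $ c)"
      using r nm A v(1) by (simp add: scalar_prod_def atLeast0LessThan A_def)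
    finally show ?thesis by simp
  qed
  ultimately show ?thesis by blast
qed

text \<open>A nonzero vector that is Euclidean-orthogonal to all \<open>vs!i\<close> and \<open>K (vs!i)\<close> is
  independent of them: pairing a relation \<open>s + a w + b K w = 0\<close> and its image under \<open>K\<close>
  with \<open>w\<close> gives \<open>a p + b q = 0\<close> and \<open>a q - b p = 0\<close>, where \<open>p = |w|\<^sup>2 > 0\<close>.\<close>

lemma cx_indep_snoc:
  assumes K: "K \<in> carrier_mat d d" and KK: "K * K = - 1\<^sub>m d" and indep: "cx_indep K d vs"
    and orth: "\<And>i. i < length vs \<Longrightarrow> dot d (vs!i) w = 0 \<and> dot d (mat_app K d (vs!i)) w = 0"
    and nonzero: "j < d" "w j \<noteq> 0"
  shows "cx_indep K d (vs @ [w])"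
  unfolding cx_indep_def
proof (intro allI impI)
  fix a b i
  assume comb: "\<forall>r<d. cx_comb K d (vs @ [w]) a b r = 0" and i: "i < length (vs @ [w])"
  define n where "n = length vs"
  define p where "p = dot d w w"
  define q where "q = dot d (mat_app K d w) w"
  let ?s = "cx_comb K d vs a b"
  have p: "p > 0" unfolding p_def using nonzero by (rule dot_self_pos)
  have orth_comb: "dot d (cx_comb K d vs a' b') w = 0" for a' b'
    unfolding dot_cx_comb by (rule sum.neutral) (simp add: orth)
  have rel: "?s r + a n * w r + b n * mat_app K d w r = 0" if "r < d" for r
    using comb that by (simp add: cx_comb_snoc n_def)
  have rel_K: "mat_app K d ?s r + a n * mat_app K d w r + - b n * w r = 0" if r: "r < d" for r
  proof -
    have "mat_app K d (\<lambda>r. ?s r + a n * w r + b n * mat_app K d w r) r = mat_app K d (\<lambda>_. 0) r"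
      by (rule mat_app_cong) (rule rel)
    then show ?thesis
      unfolding mat_app_add3 mat_app_mat_app[OF K KK r] by (simp add: mat_app_def)
  qed
  have "0 = dot d (\<lambda>r. ?s r + a n * w r + b n * mat_app K d w r) w"
    by (rule dot_zero_left[symmetric]) (rule rel)
  then have E1: "a n * p + b n * q = 0"
    unfolding dot_add3 orth_comb p_def q_def by simp
  have "dot d (mat_app K d ?s) w = dot d (cx_comb K d vs (\<lambda>i. - b i) a) w"
    by (rule dot_cong) (rule mat_app_cx_comb[OF K KK])
  moreover have "0 = dot d (\<lambda>r. mat_app K d ?s r + a n * mat_app K d w r + - b n * w r) w"
    by (rule dot_zero_left[symmetric]) (rule rel_K)
  ultimately have E2: "a n * q - b n * p = 0"
    unfolding dot_add3 orth_comb p_def q_def by simp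
  have "a n * (p * p + q * q) = p * (a n * p + b n * q) + q * (a n * q - b n * p)"
    by (simp add: algebra_simps)
  with E1 E2 have "a n * (p * p + q * q) = 0" by simp
  moreover have "p * p + q * q > 0" using p by (simp add: add_pos_nonneg)
  ultimately have a: "a n = 0" by (metis mult_eq_0_iff less_irrefl)
  with E2 p have b: "b n = 0" by simp
  from a b rel have "\<forall>r<d. ?s r = 0" by simp
  with indep have "\<forall>i<n. a i = 0 \<and> b i = 0" unfolding cx_indep_def n_def by blast
  with a b i show "a i = 0 \<and> b i = 0"
    unfolding n_def by (auto simp: less_Suc_eq)
qed

lemma cx_indep_extend:
  assumes K: "K \<in> carrier_mat d d" and KK: "K * K = - 1\<^sub>m d" and indep: "cx_indep K d vs"
    and lt: "2 * length vs < d"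
  shows "\<exists>w. cx_indep K d (vs @ [w])"
proof -
  define n where "n = length vs"
  define N where "N = (\<lambda>r c. if r < n then (vs!r) c else mat_app K d (vs!(r - n)) c)"
  obtain w where w: "\<exists>j<d. w j \<noteq> 0" "\<forall>r<n + n. (\<Sum>c<d. N r c * w c) = 0"
    using exists_nonzero_solution[of "n + n" d N] lt unfolding n_def by auto
  have "dot d (vs!i) w = 0 \<and> dot d (mat_app K d (vs!i)) w = 0" if i: "i < length vs" for i
  proof -
    have "i < n + n" "n + i < n + n" using i unfolding n_def by simp_all
    with w(2) have "(\<Sum>c<d. N i c * w c) = 0" "(\<Sum>c<d. N (n + i) c * w c) = 0" by blast+
    then show ?thesis using i unfolding dot_def N_def n_def by simp
  qed
  with w(1) show ?thesis using cx_indep_snoc[OF K KK indep] by blast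
qed

lemma cx_indep_exists:
  assumes K: "K \<in> carrier_mat d d" and KK: "K * K = - 1\<^sub>m d"
  shows "2 * j \<le> d \<Longrightarrow> \<exists>vs. cx_indep K d vs \<and> length vs = j"
proof (induction j)
  case 0
  have "cx_indep K d []" unfolding cx_indep_def by simp
  then show ?case by blast
next
  case (Suc j)
  then obtain vs where vs: "cx_indep K d vs" "length vs = j" by auto
  with Suc.prems obtain w where "cx_indep K d (vs @ [w])"
    using cx_indep_extend[OF K KK] by fastforce
  with vs(2) show ?case by (intro exI[of _ "vs @ [w]"]) simp
qed

lemma even_dim_if_square_neg_one:
  assumes K: "(K :: real mat) \<in> carrier_mat d d" and KK: "K * K = - 1\<^sub>m d"
  shows "even d"
proof -
  have "- 1\<^sub>m d = (- 1 :: real) \<cdot>\<^sub>m 1\<^sub>m d" by (rule eq_matI) auto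
  then have "det K * det K = (- 1) ^ d" using det_mult[OF K K] KK by simp
  moreover have "det K * det K \<ge> 0" by simp
  ultimately have "(- 1 :: real) ^ d \<ge> 0" by simp
  then show ?thesis by (metis neg_one_odd_power le_minus_one_simps(3))
qed

lemma sum_lessThan_add: "(\<Sum>c<j + k. f c) = (\<Sum>i<j. f i) + (\<Sum>i<k. f (j + i))"
  for j k :: nat
  by (induction k) (simp_all add: add.assoc)

definition cx_basis_mat :: "real mat \<Rightarrow> nat \<Rightarrow> (nat \<Rightarrow> real) list \<Rightarrow> real mat" where
  "cx_basis_mat K d vs = mat d d (\<lambda>(r, c).
     if c < length vs then (vs!c) r else mat_app K d (vs!(c - length vs)) r)"

lemma invertible_cx_basis_mat:
  assumes indep: "cx_indep K d vs" and d: "d = length vs + length vs"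
  shows "invertible_mat (cx_basis_mat K d vs)"
proof -
  define k where "k = length vs"
  let ?A = "cx_basis_mat K d vs"
  have A: "?A \<in> carrier_mat d d" unfolding cx_basis_mat_def by simp
  have "det ?A \<noteq> 0"
  proof
    assume "det ?A = 0"
    then obtain v where v: "v \<in> carrier_vec d" "v \<noteq> 0\<^sub>v d" "?A *\<^sub>v v = 0\<^sub>v d"
      using det_0_iff_vec_prod_zero_field[OF A] by blast
    have "cx_comb K d vs (\<lambda>i. v $ i) (\<lambda>i. v $ (k + i)) r = 0" if r: "r < d" for r
    proof -
      have "0 = (?A *\<^sub>v v) $ r" using v(3) r by simp
      also have "\<dots> = (\<Sum>c<k + k. ?A $$ (r, c) * v $ c)"
        using r v(1) A d by (simp add: scalar_prod_def atLeast0LessThan k_def)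
      also have "\<dots> = (\<Sum>i<k. ?A $$ (r, i) * v $ i) + (\<Sum>i<k. ?A $$ (r, k + i) * v $ (k + i))"
        by (rule sum_lessThan_add)
      also have "\<dots> = cx_comb K d vs (\<lambda>i. v $ i) (\<lambda>i. v $ (k + i)) r"
        unfolding cx_comb_def k_def sum.distrib[symmetric]
        by (rule sum.cong[OF refl]) (use r d in \<open>auto simp: cx_basis_mat_def\<close>)
      finally show ?thesis by simp
    qed
    with indep have zero: "\<forall>i<k. v $ i = 0 \<and> v $ (k + i) = 0"
      unfolding cx_indep_def k_def by blast
    have "v = 0\<^sub>v d"
    proof (rule eq_vecI)
      fix i assume "i < dim_vec (0\<^sub>v d :: real vec)"
      then have "i < k + k" using d k_def by simp
      then have "i < k \<or> (i = k + (i - k) \<and> i - k < k)" by auto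
      then show "v $ i = 0\<^sub>v d $ i"
        using zero \<open>i < k + k\<close> d k_def by (metis index_zero_vec(1))
    qed (use v in simp)
    with v(2) show False by contradiction
  qed
  then show ?thesis by (rule invertible_mat_if_det_nonzero[OF A])
qed

lemma cx_basis_mat_J_std:
  assumes K: "K \<in> carrier_mat (k + k) (k + k)" and KK: "K * K = - 1\<^sub>m (k + k)"
    and len: "length vs = k"
  shows "K * cx_basis_mat K (k + k) vs = cx_basis_mat K (k + k) vs * J_std k"
proof (rule eq_matI)
  let ?d = "k + k" and ?A = "cx_basis_mat K (k + k) vs"
  have A: "?A \<in> carrier_mat ?d ?d" unfolding cx_basis_mat_def by simp
  fix r c assume "r < dim_row (?A * J_std k)" "c < dim_col (?A * J_std k)"
  then have r: "r < ?d" and c: "c < ?d" using A J_std_carrier[of k] by auto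
  have "(K * ?A) $$ (r, c) = mat_app K ?d (\<lambda>l. ?A $$ (l, c)) r"
    using K A r c by (simp add: scalar_prod_def mat_app_def atLeast0LessThan)
  also have "\<dots> = (if c < k then ?A $$ (r, c + k) else - ?A $$ (r, c - k))"
  proof (cases "c < k")
    case True
    then have "mat_app K ?d (\<lambda>l. ?A $$ (l, c)) r = mat_app K ?d (vs!c) r"
      by (intro mat_app_cong) (simp add: cx_basis_mat_def len)
    with True r len show ?thesis by (simp add: cx_basis_mat_def)
  next
    case False
    then have "mat_app K ?d (\<lambda>l. ?A $$ (l, c)) r = mat_app K ?d (mat_app K ?d (vs!(c - k))) r"
      using c by (intro mat_app_cong) (simp add: cx_basis_mat_def len)
    also have "\<dots> = - (vs!(c - k)) r" by (rule mat_app_mat_app[OF K KK r])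
    moreover have "c - k < k" using False c by simp
    ultimately show ?thesis using False r len by (simp add: cx_basis_mat_def)
  qed
  also have "\<dots> = (\<Sum>m<?d. ?A $$ (r, m) * J_std k $$ (m, c))"
    by (rule sum_mult_J_std[OF c, symmetric])
  also have "\<dots> = (?A * J_std k) $$ (r, c)"
    by (rule index_mult_mat_sum[OF A J_std_carrier r c, symmetric])
  finally show "(K * ?A) $$ (r, c) = (?A * J_std k) $$ (r, c)" .
qed (use K J_std_carrier[of k] in \<open>auto simp: cx_basis_mat_def\<close>)

lemma square_neg_one_conj_J_std:
  assumes K: "K \<in> carrier_mat (k + k) (k + k)" and KK: "K * K = - 1\<^sub>m (k + k)"
  obtains A where "A \<in> carrier_mat (k + k) (k + k)" "invertible_mat A" "K * A = A * J_std k"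
proof -
  obtain vs where vs: "cx_indep K (k + k) vs" "length vs = k"
    using cx_indep_exists[OF K KK, of k] by auto
  show thesis
  proof
    show "cx_basis_mat K (k + k) vs \<in> carrier_mat (k + k) (k + k)"
      unfolding cx_basis_mat_def by simp
    show "invertible_mat (cx_basis_mat K (k + k) vs)"
      using vs by (intro invertible_cx_basis_mat) simp_all
    show "K * cx_basis_mat K (k + k) vs = cx_basis_mat K (k + k) vs * J_std k"
      by (rule cx_basis_mat_J_std[OF K KK vs(2)])
  qed
qed

lemma conj_J_std_square:
  assumes A: "A \<in> carrier_mat (k + k) (k + k)" and inv: "invertible_mat A"
  shows "A * J_std k * mat_inv A * (A * J_std k * mat_inv A) = - 1\<^sub>m (k + k)"
proof -
  note Ai = mat_inv[OF A inv]
  note J = J_std_carrier[of k]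
  have "A * J_std k * mat_inv A * (A * J_std k * mat_inv A) = A * (J_std k * J_std k) * mat_inv A"
    using A J Ai by (simp add: assoc_mult_mat_dims mult_mat_cancel_left[OF A Ai(1) Ai(3)])
  also have "\<dots> = - (A * mat_inv A)"
    using A J Ai unfolding J_std_square by (simp add: assoc_mult_mat_dims)
  also have "\<dots> = - 1\<^sub>m (k + k)" using Ai by simp
  finally show ?thesis .
qed

lemma unrealify_GL_complex:
  assumes C: "C \<in> carrier_mat (k + k) (k + k)" and D: "D \<in> carrier_mat (k + k) (k + k)"
    and CD: "C * D = 1\<^sub>m (k + k)" and DC: "D * C = 1\<^sub>m (k + k)"
    and commC: "C * J_std k = J_std k * C"
  shows "unrealify k C \<in> GL_complex k"
proof -
  note J = J_std_carrier[of k]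
  have "D * J_std k = D * (C * J_std k) * D"
    unfolding commC using C D J CD by (simp add: assoc_mult_mat_dims)
  also have "\<dots> = J_std k * D"
    using C D J by (simp add: assoc_mult_mat_dims mult_mat_cancel_left[OF C D DC])
  finally have commD: "D * J_std k = J_std k * D" .
  have "realify (unrealify k C * unrealify k D) = realify (1\<^sub>m k)"
    unfolding realify_mult[OF unrealify_carrier unrealify_carrier] realify_one
      realify_unrealify_if_commutes_J_std[OF C commC] realify_unrealify_if_commutes_J_std[OF D commD]
    by (rule CD)
  then have "unrealify k C * unrealify k D = 1\<^sub>m k"
    by (rule realify_inj[OF mult_carrier_mat[OF unrealify_carrier unrealify_carrier] one_carrier_mat])
  then show ?thesis
    unfolding GL_complex_def
    using invertible_mat_if_right_inverse[OF unrealify_carrier unrealify_carrier] unrealify_carrier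
    by auto
qed

text \<open>The stabiliser of \<open>J_std k\<close> under conjugation is the group of matrices commuting
  with it, i.e.\ the realified complex matrices.\<close>

lemma conj_J_std_eq_iff:
  assumes A: "A \<in> carrier_mat (k + k) (k + k)" and iA: "invertible_mat A"
    and B: "B \<in> carrier_mat (k + k) (k + k)" and iB: "invertible_mat B"
  shows "A * J_std k * mat_inv A = B * J_std k * mat_inv B \<longleftrightarrow> (\<exists>Z\<in>GL_complex k. B = A * realify Z)"
proof
  note Ai = mat_inv[OF A iA] and Bi = mat_inv[OF B iB]
  note J = J_std_carrier[of k]
  let ?J = "J_std k"
  assume eq: "A * ?J * mat_inv A = B * ?J * mat_inv B"
  define C where "C = mat_inv A * B"
  define D where "D = mat_inv B * A"
  have C: "C \<in> carrier_mat (k + k) (k + k)" unfolding C_def using Ai B by auto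
  have D: "D \<in> carrier_mat (k + k) (k + k)" unfolding D_def using Bi A by auto
  have DC: "D * C = 1\<^sub>m (k + k)" and CD: "C * D = 1\<^sub>m (k + k)"
    unfolding C_def D_def using A B Ai Bi
    by (simp_all add: assoc_mult_mat_dims mult_mat_cancel_left[OF Ai(1) A Ai(2)]
        mult_mat_cancel_left[OF Bi(1) B Bi(2)])
  have "?J * C = mat_inv A * (A * ?J * mat_inv A) * B"
    unfolding C_def using A B J Ai by (simp add: assoc_mult_mat_dims mult_mat_cancel_left[OF A Ai(1) Ai(3)])
  also have "\<dots> = C * ?J"
    unfolding eq C_def using A B J Ai Bi by (simp add: assoc_mult_mat_dims)
  finally have commC: "C * ?J = ?J * C" by simp
  have "A * C = B"
    unfolding C_def using B by (simp add: mult_mat_cancel_left[OF Ai(1) A Ai(2)])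
  then have "B = A * realify (unrealify k C)"
    unfolding realify_unrealify_if_commutes_J_std[OF C commC] by simp
  with unrealify_GL_complex[OF C D CD DC commC] show "\<exists>Z\<in>GL_complex k. B = A * realify Z"
    by blast
next
  note Ai = mat_inv[OF A iA] and Bi = mat_inv[OF B iB]
  note J = J_std_carrier[of k]
  let ?J = "J_std k"
  assume "\<exists>Z\<in>GL_complex k. B = A * realify Z"
  then obtain Z where Z: "Z \<in> carrier_mat k k" and BZ: "B = A * realify Z"
    unfolding GL_complex_def by auto
  have R: "realify Z \<in> carrier_mat (k + k) (k + k)" by (rule realify_carrier[OF Z])
  have "A * ?J * mat_inv A * B = B * ?J"
    unfolding BZ using A J Ai R
    by (simp add: assoc_mult_mat_dims mult_mat_cancel_left[OF A Ai(1) Ai(3)] realify_mult_J_std[OF Z])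
  then have "B * ?J * mat_inv B = A * ?J * mat_inv A * B * mat_inv B" by simp
  also have "\<dots> = A * ?J * mat_inv A" using A J Ai B Bi by (simp add: assoc_mult_mat_dims)
  finally show "A * ?J * mat_inv A = B * ?J * mat_inv B" by simp
qed

section \<open>Parametrization and the main result\<close>

lemma param_eq: "param e (h + h) A = transport e (h + h) (A * J_std h * mat_inv A)"
  unfolding param_def by simp

lemma conj_J_std_carrier:
  assumes "A \<in> GL_real (h + h)"
  shows "A * J_std h * mat_inv A \<in> carrier_mat (h + h) (h + h)"
  using assms mat_inv[of A "h + h"] J_std_carrier[of h] unfolding GL_real_def by auto

lemma param_in_class_cs:
  assumes e: "bij_betw e {0..<h + h} (M_class M chi a)" and A: "A \<in> GL_real (h + h)"
  shows "param e (h + h) A \<in> class_cs M chi (M_class M chi a)"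
  unfolding class_cs_def param_eq
proof (intro CollectI conjI allI impI ballI)
  fix i j assume "i \<notin> M_class M chi a \<or> j \<notin> M_class M chi a"
  then show "transport e (h + h) (A * J_std h * mat_inv A) i j = 0"
    by (rule transport_outside[OF e])
next
  fix i k assume "i \<in> M_class M chi a" "k \<in> M_class M chi a"
  moreover have "A * J_std h * mat_inv A * (A * J_std h * mat_inv A) = - 1\<^sub>m (h + h)"
    using A conj_J_std_square unfolding GL_real_def by blast
  ultimately show "(\<Sum>j\<in>M_class M chi a. transport e (h + h) (A * J_std h * mat_inv A) i j
      * transport e (h + h) (A * J_std h * mat_inv A) j k) = (if i = k then -1 else 0)"
    using transport_square_neg_one[OF e conj_J_std_carrier[OF A]] by blast
next
  fix m i k assume "m \<in> M" "i \<in> M_class M chi a" "k \<in> M_class M chi a"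
  then have "chi m i = chi m k" by (simp add: M_class_def M_equiv_def)
  then show "transport e (h + h) (A * J_std h * mat_inv A) i k * chi m k
      = chi m i * transport e (h + h) (A * J_std h * mat_inv A) i k" by simp
qed

lemma class_cs_subset_param_image:
  assumes e: "bij_betw e {0..<h + h} (M_class M chi a)"
  shows "class_cs M chi (M_class M chi a) \<subseteq> param e (h + h) ` GL_real (h + h)"
proof
  fix K assume "K \<in> class_cs M chi (M_class M chi a)"
  then have outside: "\<forall>i j. i \<notin> M_class M chi a \<or> j \<notin> M_class M chi a \<longrightarrow> K i j = 0"
    and sq: "\<forall>i\<in>M_class M chi a. \<forall>k\<in>M_class M chi a.
      (\<Sum>j\<in>M_class M chi a. K i j * K j k) = (if i = k then -1 else 0)"
    unfolding class_cs_def by blast+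
  define X where "X = mat (h + h) (h + h) (\<lambda>(p, q). K (e p) (e q))"
  have X: "X \<in> carrier_mat (h + h) (h + h)" unfolding X_def by simp
  have "X * X = - 1\<^sub>m (h + h)" unfolding X_def by (rule restrict_square_neg_one[OF e sq])
  with X obtain A where A: "A \<in> carrier_mat (h + h) (h + h)" "invertible_mat A"
    and XA: "X * A = A * J_std h"
    by (rule square_neg_one_conj_J_std)
  have "A * J_std h * mat_inv A = X"
    unfolding XA[symmetric] using X A mat_inv[OF A] by (simp add: assoc_mult_mat_dims)
  then have "param e (h + h) A = K"
    unfolding param_eq X_def by (rule ssubst) (rule transport_restrict[OF e outside])
  moreover have "A \<in> GL_real (h + h)" unfolding GL_real_def using A by simp
  ultimately show "K \<in> param e (h + h) ` GL_real (h + h)" by blast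
qed

lemma param_eq_iff:
  assumes e: "bij_betw e {0..<h + h} C" and A: "A \<in> GL_real (h + h)" and B: "B \<in> GL_real (h + h)"
  shows "param e (h + h) A = param e (h + h) B \<longleftrightarrow> (\<exists>Z\<in>GL_complex h. B = A * realify Z)"
proof -
  have "param e (h + h) A = param e (h + h) B \<longleftrightarrow> A * J_std h * mat_inv A = B * J_std h * mat_inv B"
    unfolding param_eq
    using transport_inj[OF e conj_J_std_carrier[OF A] conj_J_std_carrier[OF B]] by metis
  also have "\<dots> \<longleftrightarrow> (\<exists>Z\<in>GL_complex h. B = A * realify Z)"
    using A B unfolding GL_real_def by (intro conj_J_std_eq_iff) auto
  finally show ?thesis .
qed

lemma even_card_M_class_if_complex_structure:
  fixes J :: "'r::finite \<Rightarrow> 'r \<Rightarrow> real"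
  assumes "complex_structure J" and "M_invariant M chi J"
  shows "even (card (M_class M chi a))"
proof -
  let ?C = "M_class M chi a"
  obtain e where e: "bij_betw e {0..<card ?C} ?C"
    using ex_bij_betw_nat_finite[of ?C] by auto
  have "\<forall>i\<in>?C. \<forall>k\<in>?C. (\<Sum>j\<in>?C. J i j * J j k) = (if i = k then -1 else 0)"
    using assms complex_structure_M_invariant_iff_direct_sum
    unfolding direct_sum_of_class_cs_def by blast
  from restrict_square_neg_one[OF e this] show ?thesis
    by (rule even_dim_if_square_neg_one[rotated]) simp
qed

text \<open>Put a copy of the standard structure \<open>J_std\<close> on each class, in an arbitrary
  enumeration of it.\<close>

lemma complex_structure_if_even_card_M_class:
  fixes chi :: "'m \<Rightarrow> 'r::finite \<Rightarrow> real"
  assumes ev: "\<forall>a. even (card (M_class M chi a))"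
  shows "\<exists>J. complex_structure J \<and> M_invariant M chi J"
proof -
  define enum where "enum C = (SOME e. bij_betw e {0..<card C} C)" for C :: "'r set"
  have enum: "bij_betw (enum C) {0..<card C} C" for C :: "'r set"
    unfolding enum_def by (rule someI_ex[OF ex_bij_betw_nat_finite]) simp
  define T where "T C = transport (enum C) (card C) (J_std (card C div 2))" for C :: "'r set"
  define J where "J i j = (if M_equiv M chi i j then T (M_class M chi j) i j else 0)" for i j
  have "direct_sum_of_class_cs M chi J"
    unfolding direct_sum_of_class_cs_def
  proof (intro conjI allI impI ballI)
    fix i j assume "\<not> M_equiv M chi i j"
    then show "J i j = 0" unfolding J_def by simp
  next
    fix a i k assume i: "i \<in> M_class M chi a" and k: "k \<in> M_class M chi a"
    let ?C = "M_class M chi a"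
    obtain h where h: "card ?C = h + h" using ev by (metis evenE mult_2)
    have "(\<Sum>j\<in>?C. J i j * J j k) = (\<Sum>j\<in>?C. T ?C i j * T ?C j k)"
    proof (rule sum.cong[OF refl])
      fix j assume j: "j \<in> ?C"
      with i k have "M_equiv M chi i j" "M_equiv M chi j k"
        by (auto simp: M_class_def M_equiv_def)
      then show "J i j * J j k = T ?C i j * T ?C j k"
        unfolding J_def using M_class_eq[OF j] M_class_eq[OF k] by simp
    qed
    also have "\<dots> = (if i = k then -1 else 0)"
      using transport_square_neg_one[OF enum[of ?C, unfolded h] J_std_carrier J_std_square i k]
      unfolding T_def h by simp
    finally show "(\<Sum>j\<in>?C. J i j * J j k) = (if i = k then -1 else 0)" .
  qed
  then show ?thesis using complex_structure_M_invariant_iff_direct_sum by blast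
qed

theorem proposition1:
  fixes M :: "'m set" and chi :: "'m \<Rightarrow> 'r::finite \<Rightarrow> real"
  assumes signs: "\<forall>m\<in>M. \<forall>a. chi m a = 1 \<or> chi m a = -1"
  shows "((\<exists>J. complex_structure J \<and> M_invariant M chi J)
            \<longleftrightarrow> (\<forall>a. even (card (M_class M chi a))))
       \<and> ((\<forall>a. even (card (M_class M chi a))) \<longrightarrow>
            (\<forall>J. (complex_structure J \<and> M_invariant M chi J) \<longleftrightarrow> direct_sum_of_class_cs M chi J)
          \<and> (\<forall>a e. bij_betw e {0..<card (M_class M chi a)} (M_class M chi a) \<longrightarrow>
               (let C = M_class M chi a; d = card C in
                 param e d ` GL_real d = class_cs M chi C
               \<and> (\<forall>A\<in>GL_real d. \<forall>B\<in>GL_real d.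
                    param e d A = param e d B \<longleftrightarrow> (\<exists>Z\<in>GL_complex (d div 2). B = A * realify Z)))))"
proof (intro conjI impI allI)
  show "(\<exists>J. complex_structure J \<and> M_invariant M chi J) \<longleftrightarrow> (\<forall>a. even (card (M_class M chi a)))"
    using even_card_M_class_if_complex_structure complex_structure_if_even_card_M_class by blast
next
  fix J
  show "complex_structure J \<and> M_invariant M chi J \<longleftrightarrow> direct_sum_of_class_cs M chi J"
    by (rule complex_structure_M_invariant_iff_direct_sum)
next
  fix a e
  assume "\<forall>a. even (card (M_class M chi a))"
    and e: "bij_betw e {0..<card (M_class M chi a)} (M_class M chi a)"
  then obtain h where h: "card (M_class M chi a) = h + h" by (metis evenE mult_2)
  with e have e': "bij_betw e {0..<h + h} (M_class M chi a)" by simp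
  have "param e (h + h) ` GL_real (h + h) = class_cs M chi (M_class M chi a)"
    using param_in_class_cs[OF e'] class_cs_subset_param_image[OF e'] by blast
  with param_eq_iff[OF e'] show "let C = M_class M chi a; d = card C in
      param e d ` GL_real d = class_cs M chi C
    \<and> (\<forall>A\<in>GL_real d. \<forall>B\<in>GL_real d.
         param e d A = param e d B \<longleftrightarrow> (\<exists>Z\<in>GL_complex (d div 2). B = A * realify Z))"
    unfolding Let_def h by simp
qed

end
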